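(* Let $G=(V,E)$ be a finite graph with $V\neq\emptyset$, let $f$ be a weight function of one of the two types described in the context (with its associated integer $k$), let $g(S)=f(S)/|S|$, and let $\epsilon\ge 0$. Let $S^p$ be the vertex set returned by the parallel peeling algorithm described in the context, and let $S^*$ be a nonempty vertex set maximizing $g$ over all nonempty subsets of $V$. Then $g(S^p)\ge \dfrac{g(S^* )}{k(1+\epsilon)}$.
   Context: Let $G=(V,E)$ be a (directed or undirected) graph. For $S\subseteq V$, $G[S]=(S,E[S])$ is the induced subgraph, $E[S]=\{(u,v)\in E: u,v\in S\}$. Two types of weight functions $f:2^V\to\mathbb{R}_{\ge 0}$ are considered. (Type A, with $k=2$; covers the metrics DG, DW, FD): fixed numbers $a_i\ge 0$ for each vertex $u_i$ and $c_{ij}\ge 0$ for each edge $(u_i,u_j)\in E$ are given, and $f(S)=\sum_{u_i\in S}a_i+\sum_{(u_i,u_j)\in E[S]}c_{ij}$. (Type B, with $k\ge 3$ the clique size; covers TDS for $k=3$ and $k$-clique densest subgraph for general $k$): $f(S)$ is the number of $k$-cliques of $G[S]$. The density is $g(S)=f(S)/|S|$ for nonempty $S$. The peeling weight of $u\in S$ is $w_u(S)=f(S)-f(S\setminus\{u\})$. Parallel peeling algorithm with parameter $\epsilon\ge 0$: set $S_0=V$, $i=1$; while $S_{i-1}\neq\emptyset$: let $U=\{u\in S_{i-1}: w_u(S_{i-1})\le k(1+\epsilon)\,g(S_{i-1})\}$, set $S_i=S_{i-1}\setminus U$, and increase $i$ by one. The algorithm outputs $S^p=\arg\max_{S_i}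 g(S_i)$ over the nonempty sets $S_i$ produced. *)

theory Defs
  imports Main "HOL.Real"
begin

text \<open>Graphs: finite vertex set V and edge set E of ordered pairs with E \<subseteq> V \<times> V.
  An undirected edge is represented by a single orientation.\<close>

definition typeA_weight :: "('a \<times> 'a) set \<Rightarrow> ('a \<Rightarrow> real) \<Rightarrow> ('a \<times> 'a \<Rightarrow> real) \<Rightarrow> 'a set \<Rightarrow> real" where
  "typeA_weight E a c S = (\<Sum>u\<in>S. a u) + (\<Sum>e\<in>E \<inter> (S \<times> S). c e)"

definition is_clique :: "('a \<times> 'a) set \<Rightarrow> 'a set \<Rightarrow> bool" where
  "is_clique E C \<longleftrightarrow> (\<forall>u\<in>C. \<forall>v\<in>C. u \<noteq> v \<longrightarrow> (u, v) \<in> E \<or> (v, u) \<in> E)"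

definition kcliques :: "('a \<times> 'a) set \<Rightarrow> nat \<Rightarrow> 'a set \<Rightarrow> 'a set set" where
  "kcliques E k S = {C. C \<subseteq> S \<and> card C = k \<and> is_clique E C}"

definition typeB_weight :: "('a \<times> 'a) set \<Rightarrow> nat \<Rightarrow> 'a set \<Rightarrow> real" where
  "typeB_weight E k S = real (card (kcliques E k S))"

definition density :: "('a set \<Rightarrow> real) \<Rightarrow> 'a set \<Rightarrow> real" where
  "density f S = f S / real (card S)"

definition peel_weight :: "('a set \<Rightarrow> real) \<Rightarrow> 'a set \<Rightarrow> 'a \<Rightarrow> real" where
  "peel_weight f S u = f S - f (S - {u})"

definition peel_step :: "('a set \<Rightarrow> real) \<Rightarrow> nat \<Rightarrow> real \<Rightarrow> 'a set \<Rightarrow> 'a set" where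
  "peel_step f k eps S = S - {u \<in> S. peel_weight f S u \<le> real k * (1 + eps) * density f S}"

text \<open>S_i; once empty it stays empty, so the algorithm's sets are exactly the nonempty S_i.\<close>
definition peel_iter :: "('a set \<Rightarrow> real) \<Rightarrow> nat \<Rightarrow> real \<Rightarrow> 'a set \<Rightarrow> nat \<Rightarrow> 'a set" where
  "peel_iter f k eps V i = (peel_step f k eps ^^ i) V"

end

theory Submission
  imports Defs
begin

text \<open>
  If \<open>S\<^sup>*\<close> has maximum density, no vertex can be dropped from it with gain, so
  every \<open>u \<in> S\<^sup>*\<close> has peel weight \<open>w\<^sub>u(S\<^sup>*) \<ge> g(S\<^sup>*)\<close>. Let \<open>S\<^sub>j\<close> be the last peeling
  set containing \<open>S\<^sup>*\<close> and \<open>u \<in> S\<^sup>*\<close> a vertex removed from it. Since peel weights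
  grow with the set (supermodularity of \<open>f\<close>),
  \<open>g(S\<^sup>*) \<le> w\<^sub>u(S\<^sup>*) \<le> w\<^sub>u(S\<^sub>j) \<le> k(1+\<epsilon>) g(S\<^sub>j) \<le> k(1+\<epsilon>) g(S\<^sup>p)\<close>.
  Such a \<open>j\<close> exists because \<open>\<Sum>\<^sub>u w\<^sub>u(S) \<le> k f(S)\<close> (every edge or clique is counted at
  most \<open>k\<close> times), so by averaging each round removes at least one vertex.
  Both weight types have these two properties.
\<close>

lemma ex_le_of_sum_le_card_mult:
  fixes g :: "'b \<Rightarrow> real"
  assumes "finite A" "A \<noteq> {}" "(\<Sum>x\<in>A. g x) \<le> real (card A) * c"
  shows "\<exists>x\<in>A. g x \<le> c"
proof (rule ccontr)
  assume "\<not> ?thesis"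
  then have "(\<Sum>x\<in>A. c) < (\<Sum>x\<in>A. g x)"
    using assms(1,2) by (intro sum_strict_mono) auto
  with assms(3) show False by simp
qed

lemma peel_iter_0 [simp]: "peel_iter f k eps V 0 = V"
  by (simp add: peel_iter_def)

lemma peel_iter_Suc: "peel_iter f k eps V (Suc i) = peel_step f k eps (peel_iter f k eps V i)"
  by (simp add: peel_iter_def)

lemma peel_step_subset: "peel_step f k eps S \<subseteq> S"
  by (auto simp: peel_step_def)

lemma peel_iter_Suc_subset: "peel_iter f k eps V (Suc i) \<subseteq> peel_iter f k eps V i"
  by (simp add: peel_iter_Suc peel_step_subset)

lemma peel_iter_subset: "peel_iter f k eps V i \<subseteq> V"
proof (induction i)
  case (Suc i)
  then show ?case using peel_iter_Suc_subset[of f k eps V i] by blast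
qed simp

lemma mem_peel_step_iff:
  "u \<in> peel_step f k eps S \<longleftrightarrow> u \<in> S \<and> real k * (1 + eps) * density f S < peel_weight f S u"
  by (auto simp: peel_step_def)

lemma density_le_peel_weight:
  assumes "finite S" "u \<in> S" "f {} = 0"
    and drop: "S - {u} \<noteq> {} \<Longrightarrow> density f (S - {u}) \<le> density f S"
  shows "density f S \<le> peel_weight f S u"
proof -
  have card_S: "real (card S) = real (card (S - {u})) + 1"
    using assms(1,2) card_Diff1_less_iff[of S u] by (simp add: card_Suc_Diff1)
  have "f (S - {u}) \<le> density f S * real (card (S - {u}))"
  proof (cases "S - {u} = {}")
    case True
    then show ?thesis by (simp add: True \<open>f {} = 0\<close>)
  next
    case False
    then have "card (S - {u}) > 0"
      using assms(1) by (simp add: card_gt_0_iff)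
    then have "f (S - {u}) = density f (S - {u}) * real (card (S - {u}))"
      by (simp add: density_def)
    also have "\<dots> \<le> density f S * real (card (S - {u}))"
      using drop[OF False] by (simp add: mult_right_mono)
    finally show ?thesis .
  qed
  moreover have "f S = density f S * real (card S)"
    using card_S by (simp add: density_def)
  ultimately show ?thesis
    using card_S by (simp add: peel_weight_def algebra_simps)
qed

locale peeling_weight =
  fixes V :: "'a set" and k :: nat and f :: "'a set \<Rightarrow> real"
  assumes finite_V: "finite V"
    and f_empty: "f {} = 0"
    and f_nonneg: "S \<subseteq> V \<Longrightarrow> 0 \<le> f S"
    and peel_weight_mono: "T \<subseteq> S \<Longrightarrow> S \<subseteq> V \<Longrightarrow> u \<in> T \<Longrightarrow> peel_weight f T u \<le> peel_weight f S u"
    and sum_peel_weight_le: "S \<subseteq> V \<Longrightarrow> (\<Sum>u\<in>S. peel_weight f S u) \<le> real k * f S"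
begin

lemma ex_small_peel_weight:
  assumes "S \<subseteq> V" "S \<noteq> {}" "0 \<le> eps"
  shows "\<exists>u\<in>S. peel_weight f S u \<le> real k * (1 + eps) * density f S"
proof (rule ex_le_of_sum_le_card_mult)
  have fin: "finite S" by (rule finite_subset[OF assms(1) finite_V])
  then show "finite S" .
  show "S \<noteq> {}" by fact
  have "0 \<le> density f S"
    using f_nonneg[OF assms(1)] by (simp add: density_def)
  moreover have "real k \<le> real k * (1 + eps)"
    using assms(3) by (simp add: distrib_left)
  ultimately have "real k * density f S \<le> real k * (1 + eps) * density f S"
    by (rule mult_right_mono[rotated])
  have "(\<Sum>u\<in>S. peel_weight f S u) \<le> real k * f S"
    by (rule sum_peel_weight_le[OF assms(1)])
  also have "\<dots> = real (card S) * (real k * density f S)"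
    using fin assms(2) by (simp add: density_def)
  also have "\<dots> \<le> real (card S) * (real k * (1 + eps) * density f S)"
    using \<open>real k * density f S \<le> real k * (1 + eps) * density f S\<close> by (rule mult_left_mono) simp
  finally show "(\<Sum>u\<in>S. peel_weight f S u) \<le> real (card S) * (real k * (1 + eps) * density f S)" .
qed

lemma card_peel_step_less:
  assumes "S \<subseteq> V" "S \<noteq> {}" "0 \<le> eps"
  shows "card (peel_step f k eps S) < card S"
proof -
  obtain u where "u \<in> S" "u \<notin> peel_step f k eps S"
    using ex_small_peel_weight[OF assms] by (auto simp: mem_peel_step_iff)
  then have "peel_step f k eps S \<subset> S"
    using peel_step_subset[of f k eps S] by blast
  then show ?thesis
    using finite_subset[OF assms(1) finite_V] by (simp add: psubset_card_mono)
qed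

lemma card_peel_iter_le:
  assumes "0 \<le> eps"
  shows "card (peel_iter f k eps V i) \<le> card V - i"
proof (induction i)
  case (Suc i)
  show ?case
  proof (cases "peel_iter f k eps V i = {}")
    case True
    then show ?thesis using peel_iter_Suc_subset[of f k eps V i] by simp
  next
    case False
    then show ?thesis
      using Suc.IH card_peel_step_less[OF peel_iter_subset False assms]
      by (simp add: peel_iter_Suc)
  qed
qed simp

lemma peel_iter_card_V: "0 \<le> eps \<Longrightarrow> peel_iter f k eps V (card V) = {}"
  using card_peel_iter_le[of eps "card V"] finite_V peel_iter_subset
  by (metis card_0_eq diff_self_eq_0 finite_subset le_zero_eq)

theorem peeling_approximation:
  assumes "0 < k" "0 \<le> eps"
    and Sp_max: "\<And>i. peel_iter f k eps V i \<noteq> {} \<Longrightarrow> density f (peel_iter f k eps V i) \<le> density f Sp"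
    and "Sstar \<subseteq> V" "Sstar \<noteq> {}"
    and Sstar_max: "\<And>S. S \<subseteq> V \<Longrightarrow> S \<noteq> {} \<Longrightarrow> density f S \<le> density f Sstar"
  shows "density f Sstar / (real k * (1 + eps)) \<le> density f Sp"
proof -
  let ?S = "peel_iter f k eps V"
  have "\<not> Sstar \<subseteq> ?S (card V)"
    using peel_iter_card_V[OF \<open>0 \<le> eps\<close>] \<open>Sstar \<noteq> {}\<close> by simp
  then obtain j where "Sstar \<subseteq> ?S j" "\<not> Sstar \<subseteq> ?S (Suc j)"
    using ex_least_nat_less[of "\<lambda>i. \<not> Sstar \<subseteq> ?S i" "card V"] \<open>Sstar \<subseteq> V\<close> by auto
  then obtain u where u: "u \<in> Sstar" "u \<in> ?S j" "u \<notin> ?S (Suc j)"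
    by blast
  have "finite Sstar"
    by (rule finite_subset[OF \<open>Sstar \<subseteq> V\<close> finite_V])
  have "density f Sstar \<le> peel_weight f Sstar u"
    using \<open>Sstar \<subseteq> V\<close> by (intro density_le_peel_weight \<open>finite Sstar\<close> u(1) f_empty Sstar_max) auto
  also have "\<dots> \<le> peel_weight f (?S j) u"
    by (rule peel_weight_mono) (use \<open>Sstar \<subseteq> ?S j\<close> peel_iter_subset[of f k eps V j] u(1) in auto)
  also have "\<dots> \<le> real k * (1 + eps) * density f (?S j)"
    using u(2,3) by (simp add: peel_iter_Suc mem_peel_step_iff)
  also have "\<dots> \<le> real k * (1 + eps) * density f Sp"
    using Sp_max[of j] u(2) assms(1,2) by (intro mult_left_mono) auto
  finally show ?thesis
    using assms(1,2) by (simp add: mult_imp_div_pos_le mult.commute)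
qed

end

lemma peel_weight_typeA:
  assumes "finite S" "u \<in> S"
  shows "peel_weight (typeA_weight E a c) S u
     = a u + (\<Sum>e\<in>E \<inter> (S \<times> S). if fst e = u \<or> snd e = u then c e else 0)"
proof -
  let ?F = "E \<inter> (S \<times> S)"
  let ?P = "\<lambda>e. fst e = u \<or> snd e = u"
  have "finite ?F" using assms(1) by simp
  have "(\<Sum>e\<in>?F. c e) = (\<Sum>e\<in>?F. if ?P e then c e else 0) + (\<Sum>e\<in>?F. if \<not> ?P e then c e else 0)"
    by (simp flip: sum.distrib) (rule sum.cong; simp)
  also have "(\<Sum>e\<in>?F. if \<not> ?P e then c e else 0) = (\<Sum>e\<in>E \<inter> ((S - {u}) \<times> (S - {u})). c e)"
    using \<open>finite ?F\<close> by (simp add: sum.inter_filter[symmetric]) (rule sum.cong; auto)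
  finally show ?thesis
    using assms by (simp add: peel_weight_def typeA_weight_def sum.remove)
qed

lemma typeA_peeling_weight:
  assumes "finite V" "\<forall>u\<in>V. 0 \<le> a u" "\<forall>e\<in>E. 0 \<le> c e"
  shows "peeling_weight V 2 (typeA_weight E a c)"
proof
  show "finite V" by fact
  show "typeA_weight E a c {} = 0" by (simp add: typeA_weight_def)
  show "0 \<le> typeA_weight E a c S" if "S \<subseteq> V" for S
    unfolding typeA_weight_def using that assms(2,3) by (intro add_nonneg_nonneg sum_nonneg) auto
  show "peel_weight (typeA_weight E a c) T u \<le> peel_weight (typeA_weight E a c) S u"
    if "T \<subseteq> S" "S \<subseteq> V" "u \<in> T" for T S u
  proof -
    have "finite S" by (rule finite_subset[OF that(2) assms(1)])
    have "finite T" by (rule finite_subset[OF that(1) \<open>finite S\<close>])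
    have "(\<Sum>e\<in>E \<inter> (T \<times> T). if fst e = u \<or> snd e = u then c e else 0)
        \<le> (\<Sum>e\<in>E \<inter> (S \<times> S). if fst e = u \<or> snd e = u then c e else 0)"
      using \<open>finite S\<close> that assms(3) by (intro sum_mono2) auto
    then show ?thesis
      using that \<open>finite S\<close> \<open>finite T\<close> by (auto simp: peel_weight_typeA)
  qed
  show "(\<Sum>u\<in>S. peel_weight (typeA_weight E a c) S u) \<le> real 2 * typeA_weight E a c S"
    if "S \<subseteq> V" for S
  proof -
    let ?F = "E \<inter> (S \<times> S)"
    have "finite S" by (rule finite_subset[OF that assms(1)])
    have incident: "(\<Sum>u\<in>S. if fst e = u \<or> snd e = u then c e else 0) \<le> 2 * c e" if "e \<in> ?F" for e
    proof -
      have "(\<Sum>u\<in>S. if fst e = u \<or> snd e = u then c e else 0)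
          \<le> (\<Sum>u\<in>S. (if fst e = u then c e else 0) + (if snd e = u then c e else 0))"
        using that assms(3) by (intro sum_mono) auto
      also have "\<dots> = 2 * c e"
        using that \<open>finite S\<close> by (auto simp: sum.distrib)
      finally show ?thesis .
    qed
    have "(\<Sum>u\<in>S. peel_weight (typeA_weight E a c) S u)
        = (\<Sum>u\<in>S. a u) + (\<Sum>u\<in>S. \<Sum>e\<in>?F. if fst e = u \<or> snd e = u then c e else 0)"
      using \<open>finite S\<close> by (simp add: peel_weight_typeA sum.distrib)
    also have "(\<Sum>u\<in>S. \<Sum>e\<in>?F. if fst e = u \<or> snd e = u then c e else 0)
        = (\<Sum>e\<in>?F. \<Sum>u\<in>S. if fst e = u \<or> snd e = u then c e else 0)"
      by (rule sum.swap)
    also have "\<dots> \<le> (\<Sum>e\<in>?F. 2 * c e)"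
      using incident by (rule sum_mono)
    also have "(\<Sum>u\<in>S. a u) + (\<Sum>e\<in>?F. 2 * c e) \<le> 2 * typeA_weight E a c S"
      using that assms(2) sum_nonneg[of S a] by (auto simp: typeA_weight_def simp flip: sum_distrib_left)
    finally show ?thesis by simp
  qed
qed

lemma finite_kcliques: "finite S \<Longrightarrow> finite (kcliques E k S)"
  by (rule finite_subset[of _ "Pow S"]) (auto simp: kcliques_def)

lemma peel_weight_typeB:
  assumes "finite S"
  shows "peel_weight (typeB_weight E k) S u = real (card {C \<in> kcliques E k S. u \<in> C})"
proof -
  have "kcliques E k S = {C \<in> kcliques E k S. u \<in> C} \<union> kcliques E k (S - {u})"
    by (auto simp: kcliques_def)
  moreover have "{C \<in> kcliques E k S. u \<in> C} \<inter> kcliques E k (S - {u}) = {}"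
    by (auto simp: kcliques_def)
  ultimately have "card (kcliques E k S) = card {C \<in> kcliques E k S. u \<in> C} + card (kcliques E k (S - {u}))"
    using finite_kcliques assms by (metis card_Un_disjoint finite_Un)
  then show ?thesis by (simp add: peel_weight_def typeB_weight_def)
qed

lemma typeB_peeling_weight:
  assumes "finite V" "0 < k"
  shows "peeling_weight V k (typeB_weight E k)"
proof
  show "finite V" by fact
  show "typeB_weight E k {} = 0"
    using assms(2) by (auto simp: typeB_weight_def kcliques_def)
  show "0 \<le> typeB_weight E k S" for S by (simp add: typeB_weight_def)
  show "peel_weight (typeB_weight E k) T u \<le> peel_weight (typeB_weight E k) S u"
    if "T \<subseteq> S" "S \<subseteq> V" for T S u
  proof -
    have "finite S" by (rule finite_subset[OF that(2) assms(1)])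
    have "finite T" by (rule finite_subset[OF that(1) \<open>finite S\<close>])
    have "{C \<in> kcliques E k T. u \<in> C} \<subseteq> {C \<in> kcliques E k S. u \<in> C}"
      using that(1) by (auto simp: kcliques_def)
    then have "card {C \<in> kcliques E k T. u \<in> C} \<le> card {C \<in> kcliques E k S. u \<in> C}"
      using finite_kcliques[OF \<open>finite S\<close>] by (simp add: card_mono)
    then show ?thesis
      using \<open>finite S\<close> \<open>finite T\<close> by (simp add: peel_weight_typeB)
  qed
  show "(\<Sum>u\<in>S. peel_weight (typeB_weight E k) S u) \<le> real k * typeB_weight E k S"
    if "S \<subseteq> V" for S
  proof -
    have "finite S" by (rule finite_subset[OF that assms(1)])
    have "card {u \<in> S. u \<in> C} = k" if "C \<in> kcliques E k S" for C
    proof -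
      have "{u \<in> S. u \<in> C} = C" using that by (auto simp: kcliques_def)
      then show ?thesis using that by (simp add: kcliques_def)
    qed
    then have "(\<Sum>u\<in>S. card {C \<in> kcliques E k S. u \<in> C}) = k * card (kcliques E k S)"
      using \<open>finite S\<close> finite_kcliques by (intro sum_multicount) auto
    then show ?thesis
      using \<open>finite S\<close> by (simp add: peel_weight_typeB typeB_weight_def flip: of_nat_sum of_nat_mult)
  qed
qed

theorem theorem4p2:
  fixes V :: "'a set" and E :: "('a \<times> 'a) set" and f :: "'a set \<Rightarrow> real"
    and k :: nat and eps :: real and Sp Sstar :: "'a set"
  assumes finV: "finite V" and neV: "V \<noteq> {}" and EV: "E \<subseteq> V \<times> V"
    and weight: "(k = 2 \<and> (\<exists>a c. (\<forall>u\<in>V. a u \<ge> 0) \<and> (\<forall>e\<in>E. c e \<ge> 0) \<and> f = typeA_weight E a c))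
               \<or> (k \<ge> 3 \<and> f = typeB_weight E k)"
    and eps: "eps \<ge> 0"
    and Sp_out: "\<exists>i. Sp = peel_iter f k eps V i \<and> Sp \<noteq> {}"
    and Sp_max: "\<forall>i. peel_iter f k eps V i \<noteq> {} \<longrightarrow> density f (peel_iter f k eps V i) \<le> density f Sp"
    and Sstar: "Sstar \<subseteq> V" "Sstar \<noteq> {}"
    and Sstar_max: "\<forall>S. S \<subseteq> V \<and> S \<noteq> {} \<longrightarrow> density f S \<le> density f Sstar"
  shows "density f Sp \<ge> density f Sstar / (real k * (1 + eps))"
proof -
  have "0 < k" using weight by auto
  from weight have "peeling_weight V k f"
  proof
    assume "k = 2 \<and> (\<exists>a c. (\<forall>u\<in>V. a u \<ge> 0) \<and> (\<forall>e\<in>E. c e \<ge> 0) \<and> f = typeA_weight E a c)"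
    then obtain a c where "k = 2" "\<forall>u\<in>V. a u \<ge> 0" "\<forall>e\<in>E. c e \<ge> 0" "f = typeA_weight E a c"
      by blast
    then show ?thesis by (simp add: typeA_peeling_weight finV)
  next
    assume "k \<ge> 3 \<and> f = typeB_weight E k"
    then show ?thesis by (simp add: typeB_peeling_weight finV)
  qed
  then show ?thesis
    by (rule peeling_weight.peeling_approximation) (use \<open>0 < k\<close> eps Sp_max Sstar Sstar_max in auto)
qed

end
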